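(* Consider the following network model. Let $q$ be a prime power, $K\ge1$, $L\ge1$, $N_{\mathrm S}\ge K$, $N_{\mathrm R}\ge1$. A source S draws $N_{\mathrm S}$ coefficient vectors i.i.d. uniformly from $\mathbb{F}_q^K$ and broadcasts one packet per vector. Each transmitted packet is erased on the link S$\to$D with probability $\epsilon_{\mathrm{SD}}$ and on the link S$\to\mathrm R_j$ with probability $\epsilon_{\mathrm{SR}_j}$ ($j=1,\dots,L$), all erasures independent across links and packets and independent of the coefficients. Relay $\mathrm R_j$, having received $m_j$ packets with coefficient matrix $\mathbf{C}_{\mathrm S\to\mathrm R_j}\in\mathbb{F}_q^{m_j\times K}$, draws $\mathbf{G}_j\in\mathbb{F}_q^{N_{\mathrm R}\times m_j}$ with i.i.d. uniform entries and transmits the $N_{\mathrm R}$ rows of $\mathbf{G}_j\mathbf{C}_{\mathrm S\to\mathrm R_j}$ to D, each independently erased with probability $\epsilon_{\mathrm R_j\mathrm D}$. D stacks all coefficient vectors it received into $\mathbf{C}_{\mathrm D}$; decoding succeeds iff $\operatorname{rank}(\mathbf{C}_{\mathrm D})=K$, and $P^{(L)}_{\mathrm R}$ is its probability. Then $$P^{(L)}_{\mathrm R}\le P(N_{\mathrm S},\tilde\epsilon),\qquad \tilde\epsilon=\epsilon_{\mathrm{SD}}\prod_{j=1}^L\epsilon_{\mathrm{SR}_j},$$ where $P(N,\epsilon)=\sum_{k=K}^{N}\binom{N}{k}(1-\epsilon)^k\epsilon^{N-k}\prod_{i=0}^{K-1}\left(1-q^{i-k}\right)$.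
   Context: $P(N,\epsilon)$ is the probability that, of $N$ packets carrying i.i.d. uniform coefficient vectors in $\mathbb{F}_q^K$, each independently erased with probability $\epsilon$, the received ones have rank $K$. *)

theory Defs
  imports "HOL-Probability.Product_PMF" "Jordan_Normal_Form.DL_Rank"
begin

definition P_decode :: "nat \<Rightarrow> nat \<Rightarrow> nat \<Rightarrow> real \<Rightarrow> real" where
  "P_decode q K N eps =
     (\<Sum>k=K..N. real (N choose k) * (1 - eps) ^ k * eps ^ (N - k) *
        (\<Prod>i<K. 1 - real q powi (int i - int k)))"

definition mat_rank :: "'a::field mat \<Rightarrow> nat" where
  "mat_rank A = vec_space.rank (dim_row A) A"

text \<open>A Bernoulli outcome True means "packet received" (probability 1 - erasure prob.).\<close>
definition relay_success_pmf ::
  "'a::{field,finite} itself \<Rightarrow> nat \<Rightarrow> nat \<Rightarrow> nat \<Rightarrow> nat \<Rightarrow> real \<Rightarrow>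
   (nat \<Rightarrow> real) \<Rightarrow> (nat \<Rightarrow> real) \<Rightarrow> bool pmf" where
  "relay_success_pmf ty K L NS NR eSD eSR eRD =
    bind_pmf (Pi_pmf {..<NS} (0\<^sub>v K) (\<lambda>_. pmf_of_set (carrier_vec K :: 'a vec set))) (\<lambda>C.
    bind_pmf (Pi_pmf {..<NS} False (\<lambda>_. bernoulli_pmf (1 - eSD))) (\<lambda>rSD.
    bind_pmf (Pi_pmf ({..<L} \<times> {..<NS}) False (\<lambda>(j,i). bernoulli_pmf (1 - eSR j))) (\<lambda>rSR.
    let CR = (\<lambda>j. mat_of_rows K (map C (filter (\<lambda>i. rSR (j, i)) [0..<NS]))) in
    bind_pmf (Pi_pmf {..<L} (0\<^sub>m 0 0) (\<lambda>j. pmf_of_set (carrier_mat NR (dim_row (CR j)) :: 'a mat set))) (\<lambda>G.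
    bind_pmf (Pi_pmf ({..<L} \<times> {..<NR}) False (\<lambda>(j,r). bernoulli_pmf (1 - eRD j))) (\<lambda>rRD.
    let rowsD = map C (filter rSD [0..<NS]) @
                concat (map (\<lambda>j. map (\<lambda>r. row (G j * CR j) r) (filter (\<lambda>r. rRD (j, r)) [0..<NR])) [0..<L]);
        CD = mat_of_rows K rowsD
    in return_pmf (mat_rank CD = K))))))"

end

theory Submission
  imports Defs
begin

text \<open>
  A packet that a relay forwards is a linear combination of the source packets the relay received.
  So if \<open>D\<close> decodes, the coefficient vectors of the source packets that reached at least one of
  \<open>D, R\<^sub>1, \<dots>, R\<^sub>L\<close> already span \<open>\<bbbF>\<^sub>q\<^sup>K\<close>. Each source packet reaches at least one of
  these nodes independently with probability \<open>1 - \<epsilon>\<close>, where \<open>\<epsilon> = \<epsilon>\<^sub>S\<^sub>D \<Prod>\<^sub>j \<epsilon>\<^sub>S\<^sub>R\<^sub>j\<close>.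
  Given \<open>k\<close> such packets, the \<open>K\<close> columns of their \<open>k \<times> K\<close> coefficient matrix must be
  linearly independent in \<open>\<bbbF>\<^sub>q\<^sup>k\<close>; as column \<open>t\<close> has \<open>q\<^sup>k - q\<^sup>t\<close> admissible values, this
  happens with probability \<open>\<Prod>\<^sub>i\<^sub><\<^sub>K (1 - q\<^sup>i\<^sup>-\<^sup>k)\<close>. Averaging over the binomial
  number \<open>k\<close> of such packets gives \<open>P(N\<^sub>S, \<epsilon>)\<close>.
\<close>

section \<open>Counting linearly independent tuples\<close>

definition vecs_on :: "'i set \<Rightarrow> ('i \<Rightarrow> 'a::zero) set" where
  "vecs_on S = PiE_dflt S 0 (\<lambda>_. UNIV)"

definition tuples_on :: "'i set \<Rightarrow> nat \<Rightarrow> (nat \<Rightarrow> 'i \<Rightarrow> 'a::zero) set" where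
  "tuples_on S m = PiE_dflt {..<m} (\<lambda>_. 0) (\<lambda>_. vecs_on S)"

definition lin_comb :: "'i set \<Rightarrow> nat \<Rightarrow> (nat \<Rightarrow> 'i \<Rightarrow> 'a::comm_ring) \<Rightarrow> (nat \<Rightarrow> 'a) \<Rightarrow> 'i \<Rightarrow> 'a" where
  "lin_comb S m v x = (\<lambda>i. if i \<in> S then \<Sum>t<m. x t * v t i else 0)"

definition lin_indep_tuple :: "'i set \<Rightarrow> nat \<Rightarrow> (nat \<Rightarrow> 'i \<Rightarrow> 'a::field) \<Rightarrow> bool" where
  "lin_indep_tuple S m v \<longleftrightarrow> (\<forall>x. lin_comb S m v x = (\<lambda>_. 0) \<longrightarrow> (\<forall>t<m. x t = 0))"

lemma lin_comb_eq_0_iff: "lin_comb S m v x = (\<lambda>_. 0) \<longleftrightarrow> (\<forall>i\<in>S. (\<Sum>t<m. x t * v t i) = 0)"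
  by (auto simp: lin_comb_def fun_eq_iff)

lemma lin_comb_diff: "lin_comb S m v (x - y) = lin_comb S m v x - lin_comb S m v y"
  by (auto simp: lin_comb_def fun_eq_iff algebra_simps sum_subtractf)

lemma lin_comb_fun_upd: "lin_comb S m (v(m := c)) = lin_comb S m v"
  by (auto simp: lin_comb_def fun_eq_iff intro!: sum.cong)

lemma lin_comb_Suc: "i \<in> S \<Longrightarrow> lin_comb S (Suc m) v x i = lin_comb S m v x i + x m * v m i"
  by (simp add: lin_comb_def)

lemma lin_comb_in_vecs_on: "lin_comb S m v x \<in> vecs_on S"
  by (simp add: lin_comb_def vecs_on_def PiE_dflt_def)

lemma card_vecs_on:
  "finite S \<Longrightarrow> card (vecs_on S :: ('i \<Rightarrow> 'a::{zero,finite}) set) = CARD('a) ^ card S"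
  unfolding vecs_on_def by (subst card_PiE_dflt) auto

lemma finite_vecs_on [simp]: "finite S \<Longrightarrow> finite (vecs_on S :: ('i \<Rightarrow> 'a::{zero,finite}) set)"
  unfolding vecs_on_def by (intro finite_PiE_dflt) auto

lemma card_tuples_on:
  "finite S \<Longrightarrow> card (tuples_on S m :: (nat \<Rightarrow> 'i \<Rightarrow> 'a::{zero,finite}) set) = CARD('a) ^ (card S * m)"
  unfolding tuples_on_def by (subst card_PiE_dflt) (auto simp: card_vecs_on power_mult)

lemma finite_tuples_on [simp]: "finite S \<Longrightarrow> finite (tuples_on S m :: (nat \<Rightarrow> 'i \<Rightarrow> 'a::{zero,finite}) set)"
  unfolding tuples_on_def by (intro finite_PiE_dflt) auto

lemma inj_on_lin_comb:
  assumes "lin_indep_tuple S m v"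
  shows "inj_on (lin_comb S m v) (vecs_on {..<m})"
proof (rule inj_onI)
  fix x y assume x: "x \<in> vecs_on {..<m}" and y: "y \<in> vecs_on {..<m}"
    and eq: "lin_comb S m v x = lin_comb S m v y"
  have "lin_comb S m v (x - y) = (\<lambda>_. 0)"
    using eq by (simp only: lin_comb_diff) (simp add: fun_diff_def)
  with assms have "\<forall>t<m. (x - y) t = 0"
    unfolding lin_indep_tuple_def by blast
  with x y show "x = y"
    by (auto simp: vecs_on_def PiE_dflt_def fun_eq_iff) (metis not_less)
qed

lemma card_span_lin_indep_tuple:
  assumes "lin_indep_tuple S m (v :: nat \<Rightarrow> 'i \<Rightarrow> 'a::{field,finite})"
  shows "card (lin_comb S m v ` vecs_on {..<m}) = CARD('a) ^ m"
  using card_image[OF inj_on_lin_comb[OF assms]] by (simp add: card_vecs_on)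

lemma lin_indep_tuple_fun_upd: "lin_indep_tuple S m (v(m := c)) \<longleftrightarrow> lin_indep_tuple S m v"
  by (simp add: lin_indep_tuple_def lin_comb_fun_upd)

lemma lin_indep_tuple_SucD:
  assumes "lin_indep_tuple S (Suc m) v"
  shows "lin_indep_tuple S m v"
  unfolding lin_indep_tuple_def
proof (rule allI, rule impI)
  fix x assume "lin_comb S m v x = (\<lambda>_. 0)"
  then have "lin_comb S (Suc m) v (x(m := 0)) = (\<lambda>_. 0)"
    by (simp add: lin_comb_eq_0_iff lin_comb_fun_upd[symmetric] lin_comb_Suc)
  with assms show "\<forall>t<m. x t = 0"
    unfolding lin_indep_tuple_def by (metis fun_upd_apply less_Suc_eq less_irrefl_nat)
qed

lemma lin_indep_tuple_Suc_iff:
  assumes indep: "lin_indep_tuple S m v" and c: "c \<in> vecs_on S"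
  shows "lin_indep_tuple S (Suc m) (v(m := c)) \<longleftrightarrow> c \<notin> lin_comb S m v ` vecs_on {..<m}"
proof
  assume indep': "lin_indep_tuple S (Suc m) (v(m := c))"
  show "c \<notin> lin_comb S m v ` vecs_on {..<m}"
  proof
    assume "c \<in> lin_comb S m v ` vecs_on {..<m}"
    then obtain y where "c = lin_comb S m v y" by blast
    then have "lin_comb S (Suc m) (v(m := c)) (y(m := -1)) = (\<lambda>_. 0)"
      by (auto simp: lin_comb_eq_0_iff lin_comb_Suc lin_comb_fun_upd[symmetric])
         (simp add: lin_comb_def lin_comb_fun_upd)
    with indep' show False
      unfolding lin_indep_tuple_def by (metis fun_upd_same lessI neg_equal_0_iff_equal one_neq_zero)
  qed
next
  assume outside: "c \<notin> lin_comb S m v ` vecs_on {..<m}"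
  show "lin_indep_tuple S (Suc m) (v(m := c))"
    unfolding lin_indep_tuple_def
  proof (rule allI, rule impI)
    fix x assume x: "lin_comb S (Suc m) (v(m := c)) x = (\<lambda>_. 0)"
    have sum_eq: "lin_comb S m v x i + x m * c i = 0" if "i \<in> S" for i
    proof -
      have "lin_comb S (Suc m) (v(m := c)) x i = 0" by (simp add: x)
      then show ?thesis by (simp add: lin_comb_Suc[OF that] lin_comb_fun_upd)
    qed
    have "x m = 0"
    proof (rule ccontr)
      assume "x m \<noteq> 0"
      define y where "y t = (if t < m then - x t / x m else 0)" for t
      have "lin_comb S m v y = c"
      proof
        fix i show "lin_comb S m v y i = c i"
        proof (cases "i \<in> S")
          case True
          have "lin_comb S m v y i = - lin_comb S m v x i / x m"
            using True by (simp add: lin_comb_def y_def sum_divide_distrib sum_negf)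
          also have "lin_comb S m v x i = - (x m * c i)"
            using sum_eq[OF True] by (simp add: eq_neg_iff_add_eq_0)
          finally show ?thesis using \<open>x m \<noteq> 0\<close> by simp
        qed (use c in \<open>simp add: lin_comb_def vecs_on_def PiE_dflt_def\<close>)
      qed
      moreover have "y \<in> vecs_on {..<m}" by (simp add: y_def vecs_on_def PiE_dflt_def)
      ultimately show False using outside by blast
    qed
    with sum_eq have "lin_comb S m v x = (\<lambda>_. 0)" by (auto simp: lin_comb_def fun_eq_iff)
    with indep \<open>x m = 0\<close> show "\<forall>t<Suc m. x t = 0"
      unfolding lin_indep_tuple_def using less_Suc_eq by auto
  qed
qed

lemma lin_indep_tuples_Suc:
  "{w \<in> tuples_on S (Suc m). lin_indep_tuple S (Suc m) w} =
     (\<lambda>(v, c). v(m := c)) `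
       (SIGMA v:{v \<in> tuples_on S m. lin_indep_tuple S m v}. vecs_on S - lin_comb S m v ` vecs_on {..<m})"
proof (intro equalityI subsetI)
  fix w assume "w \<in> {w \<in> tuples_on S (Suc m). lin_indep_tuple S (Suc m) w}"
  then have w: "w \<in> tuples_on S (Suc m)" "lin_indep_tuple S (Suc m) w" by auto
  define v where "v = w(m := (\<lambda>_. 0))"
  have "lin_indep_tuple S m v"
    using lin_indep_tuple_SucD[OF w(2)] by (simp add: v_def lin_indep_tuple_fun_upd)
  moreover have "v \<in> tuples_on S m" "w m \<in> vecs_on S"
    using w(1) by (auto simp: v_def tuples_on_def PiE_dflt_def)
  moreover have "w = v(m := w m)" by (simp add: v_def)
  ultimately show "w \<in> (\<lambda>(v, c). v(m := c)) `
       (SIGMA v:{v \<in> tuples_on S m. lin_indep_tuple S m v}. vecs_on S - lin_comb S m v ` vecs_on {..<m})"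
    using w(2) lin_indep_tuple_Suc_iff by (intro image_eqI[of _ _ "(v, w m)"]) fastforce+
qed (auto simp: tuples_on_def PiE_dflt_def lin_indep_tuple_Suc_iff)

theorem card_lin_indep_tuples:
  assumes "finite S"
  shows "real (card {v \<in> tuples_on S m. lin_indep_tuple S m (v :: nat \<Rightarrow> 'i \<Rightarrow> 'a::{field,finite})})
       = (\<Prod>t<m. real CARD('a) ^ card S - real CARD('a) ^ t)"
proof (induction m)
  case 0
  have "{v \<in> tuples_on S 0. lin_indep_tuple S 0 v} = {\<lambda>_ _. 0 :: 'a}"
    by (auto simp: tuples_on_def PiE_dflt_def lin_indep_tuple_def fun_eq_iff)
  then show ?case by simp
next
  case (Suc m)
  let ?I = "\<lambda>m. {v \<in> tuples_on S m. lin_indep_tuple S m (v :: nat \<Rightarrow> 'i \<Rightarrow> 'a)}"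
  let ?span = "\<lambda>v. lin_comb S m v ` vecs_on {..<m}"
  have inj: "inj_on (\<lambda>(v, c). v(m := c)) (?I m \<times> UNIV)"
    by (auto simp: inj_on_def tuples_on_def PiE_dflt_def fun_eq_iff)
  have complement: "real (card (vecs_on S - ?span v)) = real CARD('a) ^ card S - real CARD('a) ^ m"
    if "v \<in> ?I m" for v
  proof -
    have "?span v \<subseteq> vecs_on S" by (auto simp: lin_comb_in_vecs_on)
    with assms have "card (?span v) \<le> card (vecs_on S :: ('i \<Rightarrow> 'a) set)"
      by (intro card_mono) auto
    with \<open>?span v \<subseteq> vecs_on S\<close> assms that show ?thesis
      by (simp add: card_Diff_subset finite_subset of_nat_diff card_vecs_on card_span_lin_indep_tuple)
  qed
  have "real (card (?I (Suc m))) = real (card (SIGMA v:?I m. vecs_on S - ?span v))"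
    unfolding lin_indep_tuples_Suc by (subst card_image) (auto intro: inj_on_subset[OF inj])
  also have "\<dots> = (\<Sum>v\<in>?I m. real (card (vecs_on S - ?span v)))"
    using assms by (subst card_SigmaI) auto
  also have "\<dots> = real (card (?I m)) * (real CARD('a) ^ card S - real CARD('a) ^ m)"
    by (simp add: complement)
  finally show ?case by (simp add: Suc.IH)
qed

section \<open>Spanning families of uniform random vectors\<close>

lemma finite_carrier_vec [simp]: "finite (carrier_vec n :: 'a::finite vec set)"
proof -
  have "carrier_vec n \<subseteq> vec_of_list ` {xs :: 'a list. length xs = n}"
  proof
    fix v :: "'a vec" assume "v \<in> carrier_vec n"
    then show "v \<in> vec_of_list ` {xs. length xs = n}"
      by (intro rev_image_eqI[of "list_of_vec v"]) (auto simp: vec_list)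
  qed
  then show ?thesis
    using finite_lists_length_eq[of "UNIV :: 'a set" n] by (auto intro: finite_subset)
qed

lemma finite_carrier_mat [simp]: "finite (carrier_mat nr nc :: 'a::finite mat set)"
proof -
  have "carrier_mat nr nc \<subseteq> mat_of_rows nc ` {rs :: 'a vec list. set rs \<subseteq> carrier_vec nc \<and> length rs = nr}"
  proof
    fix A :: "'a mat" assume "A \<in> carrier_mat nr nc"
    then show "A \<in> mat_of_rows nc ` {rs. set rs \<subseteq> carrier_vec nc \<and> length rs = nr}"
      using mat_of_rows_rows[of A] by (intro rev_image_eqI[of "rows A"]) (auto simp: rows_def)
  qed
  then show ?thesis
    using finite_lists_length_eq[OF finite_carrier_vec, of nc nr] by (auto intro: finite_subset)
qed

lemma carrier_vec_nonempty: "(carrier_vec n :: 'a::zero vec set) \<noteq> {}"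
  using zero_carrier_vec by blast

lemma carrier_mat_nonempty: "(carrier_mat nr nc :: 'a::zero mat set) \<noteq> {}"
  using zero_carrier_mat by blast

text \<open>Stated through the annihilator: the family spans \<open>\<bbbF>\<^sup>K\<close> iff only \<open>0\<close> is orthogonal to all of it.\<close>
definition spanning_family :: "nat \<Rightarrow> 'i set \<Rightarrow> ('i \<Rightarrow> 'a::field vec) \<Rightarrow> bool" where
  "spanning_family K S C \<longleftrightarrow> (\<forall>x\<in>carrier_vec K. (\<forall>i\<in>S. C i \<bullet> x = 0) \<longrightarrow> x = 0\<^sub>v K)"

definition column_tuple :: "nat \<Rightarrow> 'i set \<Rightarrow> ('i \<Rightarrow> 'a::zero vec) \<Rightarrow> nat \<Rightarrow> 'i \<Rightarrow> 'a" where
  "column_tuple K S C = (\<lambda>t i. if t < K \<and> i \<in> S then C i $ t else 0)"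

lemma bij_betw_column_tuple:
  "bij_betw (column_tuple K S) (PiE_dflt S (0\<^sub>v K) (\<lambda>_. carrier_vec K)) (tuples_on S K)"
  by (rule bij_betw_byWitness[where f' = "\<lambda>v i. if i \<in> S then vec K (\<lambda>t. v t i) else 0\<^sub>v K"])
     (auto simp: column_tuple_def tuples_on_def vecs_on_def PiE_dflt_def fun_eq_iff intro!: eq_vecI)

lemma spanning_family_iff_lin_indep_column_tuple:
  fixes C :: "'i \<Rightarrow> 'a::field vec"
  assumes C: "\<And>i. i \<in> S \<Longrightarrow> C i \<in> carrier_vec K"
  shows "spanning_family K S C \<longleftrightarrow> lin_indep_tuple S K (column_tuple K S C)"
proof -
  have dot: "C i \<bullet> vec K y = (\<Sum>t<K. y t * column_tuple K S C t i)" if "i \<in> S" for i y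
    using C[OF that] that
    by (auto simp: scalar_prod_def column_tuple_def atLeast0LessThan mult.commute intro!: sum.cong)
  show ?thesis
  proof
    assume span: "spanning_family K S C"
    show "lin_indep_tuple S K (column_tuple K S C)"
      unfolding lin_indep_tuple_def lin_comb_eq_0_iff
    proof (rule allI, rule impI)
      fix y assume "\<forall>i\<in>S. (\<Sum>t<K. y t * column_tuple K S C t i) = 0"
      with span dot have "vec K y = 0\<^sub>v K" by (simp add: spanning_family_def)
      then show "\<forall>t<K. y t = 0" by (metis index_vec index_zero_vec(1))
    qed
  next
    assume indep: "lin_indep_tuple S K (column_tuple K S C)"
    show "spanning_family K S C"
      unfolding spanning_family_def
    proof (intro ballI impI)
      fix x :: "'a vec" assume x: "x \<in> carrier_vec K" and orth: "\<forall>i\<in>S. C i \<bullet> x = 0"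
      have "x = vec K (($) x)" using x by auto
      with orth dot have "lin_comb S K (column_tuple K S C) (($) x) = (\<lambda>_. 0)"
        by (simp add: lin_comb_eq_0_iff) metis
      with indep have "\<forall>t<K. x $ t = 0" by (simp add: lin_indep_tuple_def)
      with x show "x = 0\<^sub>v K" by (intro eq_vecI) auto
    qed
  qed
qed

lemma prod_diff_powers_divide:
  fixes q :: real
  assumes "q \<noteq> 0"
  shows "(\<Prod>t<m. q ^ k - q ^ t) / q ^ (k * m) = (\<Prod>t<m. 1 - q powi (int t - int k))"
proof -
  have "(\<Prod>t<m. q ^ k - q ^ t) / q ^ (k * m) = (\<Prod>t<m. (q ^ k - q ^ t) / q ^ k)"
    by (simp add: prod_dividef power_mult)
  also have "\<dots> = (\<Prod>t<m. 1 - q powi (int t - int k))"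
    using assms by (intro prod.cong) (simp_all add: power_int_diff diff_divide_distrib)
  finally show ?thesis .
qed

text \<open>Counting the \<open>K\<close> columns, which must be independent vectors of \<open>\<bbbF>\<^sup>S\<close>.\<close>
lemma prob_spanning_family:
  fixes S :: "'i set"
  assumes "finite A" "S \<subseteq> A"
  shows "measure_pmf.prob (Pi_pmf A (0\<^sub>v K) (\<lambda>_. pmf_of_set (carrier_vec K :: 'a::{field,finite} vec set)))
           {C. spanning_family K S C} = (\<Prod>t<K. 1 - real CARD('a) powi (int t - int (card S)))"
proof -
  let ?V = "carrier_vec K :: 'a vec set"
  let ?F = "PiE_dflt S (0\<^sub>v K) (\<lambda>_. ?V)"
  let ?E = "{C. spanning_family K S C}"
  have S: "finite S" using assms finite_subset by blast
  have V: "?V \<noteq> {}" by (rule carrier_vec_nonempty)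
  let ?restrict = "\<lambda>f x. if x \<in> S then f x else 0\<^sub>v K"
  have preimage: "?restrict -` ?E = ?E"
    by (simp add: spanning_family_def)
  have "measure_pmf.prob (Pi_pmf A (0\<^sub>v K) (\<lambda>_. pmf_of_set ?V)) ?E
      = measure_pmf.prob (map_pmf ?restrict (Pi_pmf A (0\<^sub>v K) (\<lambda>_. pmf_of_set ?V))) ?E"
    by (subst measure_map_pmf, subst preimage) (rule refl)
  also have "\<dots> = measure_pmf.prob (Pi_pmf S (0\<^sub>v K) (\<lambda>_. pmf_of_set ?V)) ?E"
    by (simp only: Pi_pmf_subset[OF assms])
  also have "\<dots> = measure_pmf.prob (pmf_of_set ?F) ?E"
    using S V by (subst Pi_pmf_of_set) auto
  also have "\<dots> = real (card (?F \<inter> ?E)) / real (card ?F)"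
    using S V by (intro measure_pmf_of_set) auto
  also have "card (?F \<inter> ?E) = card {v \<in> tuples_on S K. lin_indep_tuple S K (v :: nat \<Rightarrow> 'i \<Rightarrow> 'a)}"
  proof (rule bij_betw_same_card, rule bij_betw_subset[OF bij_betw_column_tuple])
    have surj: "column_tuple K S ` ?F = tuples_on S K"
      by (rule bij_betw_imp_surj_on[OF bij_betw_column_tuple])
    have iff: "C \<in> ?E \<longleftrightarrow> lin_indep_tuple S K (column_tuple K S C)" if "C \<in> ?F" for C
      using that by (simp add: spanning_family_iff_lin_indep_column_tuple PiE_dflt_def)
    show "column_tuple K S ` (?F \<inter> ?E) = {v \<in> tuples_on S K. lin_indep_tuple S K v}"
    proof (intro equalityI subsetI)
      fix v assume "v \<in> column_tuple K S ` (?F \<inter> ?E)"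
      then obtain C where "C \<in> ?F" "C \<in> ?E" "v = column_tuple K S C" by blast
      with surj iff show "v \<in> {v \<in> tuples_on S K. lin_indep_tuple S K v}" by blast
    next
      fix v :: "nat \<Rightarrow> 'i \<Rightarrow> 'a" assume v: "v \<in> {v \<in> tuples_on S K. lin_indep_tuple S K v}"
      with surj obtain C where "C \<in> ?F" "v = column_tuple K S C" by blast
      with v iff show "v \<in> column_tuple K S ` (?F \<inter> ?E)" by blast
    qed
  qed auto
  also have "card ?F = card (tuples_on S K :: (nat \<Rightarrow> 'i \<Rightarrow> 'a) set)"
    by (rule bij_betw_same_card[OF bij_betw_column_tuple])
  finally show ?thesis
    using S by (simp add: card_lin_indep_tuples card_tuples_on prod_diff_powers_divide)
qed

section \<open>Independent erasures\<close>

lemma bool_pmf_eqI: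
  fixes p q :: "bool pmf"
  assumes "pmf p False = pmf q False"
  shows "p = q"
proof (rule pmf_eqI)
  fix b show "pmf p b = pmf q b"
    using assms by (cases b) (simp_all add: pmf_False_conv_True)
qed

lemma map_pmf_Bex_Pi_bernoulli:
  assumes "finite J" "\<And>j. j \<in> J \<Longrightarrow> b j \<in> {0..1}"
  shows "map_pmf (\<lambda>y. \<exists>j\<in>J. y j) (Pi_pmf J False (\<lambda>j. bernoulli_pmf (b j)))
         = bernoulli_pmf (1 - (\<Prod>j\<in>J. 1 - b j))"
proof (rule bool_pmf_eqI)
  have "(\<lambda>y. \<exists>j\<in>J. y j) -` {False} = Pi J (\<lambda>_. {False})" by auto
  then have "pmf (map_pmf (\<lambda>y. \<exists>j\<in>J. y j) (Pi_pmf J False (\<lambda>j. bernoulli_pmf (b j)))) False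
      = (\<Prod>j\<in>J. 1 - b j)"
    using assms by (simp add: pmf_map measure_Pi_pmf_Pi measure_pmf_single)
  also have "\<dots> = pmf (bernoulli_pmf (1 - (\<Prod>j\<in>J. 1 - b j))) False"
    using assms by (simp add: prod_nonneg prod_le_1)
  finally show "pmf (map_pmf (\<lambda>y. \<exists>j\<in>J. y j) (Pi_pmf J False (\<lambda>j. bernoulli_pmf (b j)))) False
      = pmf (bernoulli_pmf (1 - (\<Prod>j\<in>J. 1 - b j))) False" .
qed

lemma map_pmf_disj_bernoulli:
  assumes "a \<in> {0..1}" "c \<in> {0..1}"
  shows "map_pmf (\<lambda>(x, z). x \<or> z) (pair_pmf (bernoulli_pmf a) (bernoulli_pmf c))
         = bernoulli_pmf (1 - (1 - a) * (1 - c))"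
proof (rule bool_pmf_eqI)
  have "(\<lambda>(x, z). x \<or> z) -` {False} = {False} \<times> {False}" by auto
  with assms show "pmf (map_pmf (\<lambda>(x, z). x \<or> z) (pair_pmf (bernoulli_pmf a) (bernoulli_pmf c))) False
      = pmf (bernoulli_pmf (1 - (1 - a) * (1 - c))) False"
    by (simp add: pmf_map measure_pmf_single pmf_pair mult_le_one)
qed

lemma Pi_pmf_pair_pmf:
  assumes "finite A"
  shows "map_pmf (\<lambda>H. (fst \<circ> H, snd \<circ> H)) (Pi_pmf A (d1, d2) (\<lambda>i. pair_pmf (p i) (q i)))
         = pair_pmf (Pi_pmf A d1 p) (Pi_pmf A d2 q)"
proof (rule pmf_eqI)
  fix fg :: "('a \<Rightarrow> 'b) \<times> ('a \<Rightarrow> 'c)"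
  obtain f g where fg: "fg = (f, g)" by (cases fg)
  have inj: "inj (\<lambda>H :: 'a \<Rightarrow> 'b \<times> 'c. (fst \<circ> H, snd \<circ> H))"
    by (rule injI) (auto simp: fun_eq_iff prod_eq_iff)
  have "fg = (\<lambda>H. (fst \<circ> H, snd \<circ> H)) (\<lambda>i. (f i, g i))" by (simp add: fg o_def)
  then have "pmf (map_pmf (\<lambda>H. (fst \<circ> H, snd \<circ> H)) (Pi_pmf A (d1, d2) (\<lambda>i. pair_pmf (p i) (q i)))) fg
      = pmf (Pi_pmf A (d1, d2) (\<lambda>i. pair_pmf (p i) (q i))) (\<lambda>i. (f i, g i))"
    by (simp only: pmf_map_inj'[OF inj])
  also have "\<dots> = pmf (pair_pmf (Pi_pmf A d1 p) (Pi_pmf A d2 q)) fg"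
    using assms by (auto simp: fg pmf_Pi pmf_pair prod.distrib)
  finally show "pmf (map_pmf (\<lambda>H. (fst \<circ> H, snd \<circ> H)) (Pi_pmf A (d1, d2) (\<lambda>i. pair_pmf (p i) (q i)))) fg
      = pmf (pair_pmf (Pi_pmf A d1 p) (Pi_pmf A d2 q)) fg" .
qed

lemma Pi_pmf_Times:
  assumes "finite A" "finite B"
  shows "map_pmf (\<lambda>F (j, i). F i j) (Pi_pmf A (\<lambda>_. d) (\<lambda>i. Pi_pmf B d (\<lambda>j. p j i)))
         = Pi_pmf (B \<times> A) d (\<lambda>(j, i). p j i)"
proof (rule pmf_eqI)
  fix G :: "'b \<times> 'a \<Rightarrow> 'c"
  have inj: "inj (\<lambda>(F :: 'a \<Rightarrow> 'b \<Rightarrow> 'c) (j, i). F i j)"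
  proof (rule injI)
    fix F1 F2 :: "'a \<Rightarrow> 'b \<Rightarrow> 'c" assume "(\<lambda>(j, i). F1 i j) = (\<lambda>(j, i). F2 i j)"
    then have "F1 i j = F2 i j" for i j by (metis (mono_tags) case_prod_conv)
    then show "F1 = F2" by (simp add: fun_eq_iff)
  qed
  have "pmf (map_pmf (\<lambda>F (j, i). F i j) (Pi_pmf A (\<lambda>_. d) (\<lambda>i. Pi_pmf B d (\<lambda>j. p j i)))) G
      = pmf (Pi_pmf A (\<lambda>_. d) (\<lambda>i. Pi_pmf B d (\<lambda>j. p j i))) (\<lambda>i j. G (j, i))"
    using pmf_map_inj'[OF inj, of _ "\<lambda>i j. G (j, i)"] by simp
  also have "\<dots> = pmf (Pi_pmf (B \<times> A) d (\<lambda>(j, i). p j i)) G"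
  proof (cases "\<forall>x. x \<notin> B \<times> A \<longrightarrow> G x = d")
    case True
    then have "pmf (Pi_pmf A (\<lambda>_. d) (\<lambda>i. Pi_pmf B d (\<lambda>j. p j i))) (\<lambda>i j. G (j, i))
        = (\<Prod>i\<in>A. pmf (Pi_pmf B d (\<lambda>j. p j i)) (\<lambda>j. G (j, i)))"
      using assms by (intro pmf_Pi') (auto simp: fun_eq_iff)
    also have "\<dots> = (\<Prod>i\<in>A. \<Prod>j\<in>B. pmf (p j i) (G (j, i)))"
      using True assms by (intro prod.cong refl pmf_Pi') auto
    also have "\<dots> = (\<Prod>(j, i)\<in>B \<times> A. pmf (p j i) (G (j, i)))"
      by (subst prod.swap) (simp add: prod.cartesian_product)
    also have "\<dots> = pmf (Pi_pmf (B \<times> A) d (\<lambda>(j, i). p j i)) G"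
      using True assms by (subst pmf_Pi') (auto simp: case_prod_unfold)
    finally show ?thesis .
  next
    case False
    then obtain j i where ji: "(j, i) \<notin> B \<times> A" "G (j, i) \<noteq> d" by auto
    have "pmf (Pi_pmf A (\<lambda>_. d) (\<lambda>i. Pi_pmf B d (\<lambda>j. p j i))) (\<lambda>i j. G (j, i)) = 0"
    proof (cases "i \<in> A")
      case True
      with ji assms have "pmf (Pi_pmf B d (\<lambda>j. p j i)) (\<lambda>j. G (j, i)) = 0"
        by (intro pmf_Pi_outside) auto
      with True assms(1) show ?thesis by (subst pmf_Pi) (auto intro!: prod_zero)
    next
      case False
      with ji assms show ?thesis by (intro pmf_Pi_outside) (auto simp: fun_eq_iff)
    qed
    moreover have "pmf (Pi_pmf (B \<times> A) d (\<lambda>(j, i). p j i)) G = 0"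
      using ji assms by (intro pmf_Pi_outside) auto
    ultimately show ?thesis by simp
  qed
  finally show "pmf (map_pmf (\<lambda>F (j, i). F i j) (Pi_pmf A (\<lambda>_. d) (\<lambda>i. Pi_pmf B d (\<lambda>j. p j i)))) G
      = pmf (Pi_pmf (B \<times> A) d (\<lambda>(j, i). p j i)) G" .
qed

lemma map_pmf_received_Pi_bernoulli:
  fixes a :: real and b :: "'j \<Rightarrow> real"
  assumes "finite I" "finite J" "a \<in> {0..1}" "\<And>j. j \<in> J \<Longrightarrow> b j \<in> {0..1}"
  shows "map_pmf (\<lambda>(r, R) i. r i \<or> (\<exists>j\<in>J. R (j, i)))
           (pair_pmf (Pi_pmf I False (\<lambda>_. bernoulli_pmf a))
                     (Pi_pmf (J \<times> I) False (\<lambda>(j, i). bernoulli_pmf (b j))))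
         = Pi_pmf I False (\<lambda>_. bernoulli_pmf (1 - (1 - a) * (\<Prod>j\<in>J. 1 - b j)))"
proof -
  let ?relays = "Pi_pmf J False (\<lambda>j. bernoulli_pmf (b j))"
  let ?P = "Pi_pmf I (False, \<lambda>_. False) (\<lambda>_. pair_pmf (bernoulli_pmf a) ?relays)"
  let ?g = "\<lambda>(x, y). x \<or> (\<exists>j\<in>J. y j)"
  have Times: "Pi_pmf (J \<times> I) False (\<lambda>(j, i). bernoulli_pmf (b j))
      = map_pmf (\<lambda>F (j, i). F i j) (Pi_pmf I (\<lambda>_. False) (\<lambda>_. ?relays))"
    using Pi_pmf_Times[OF assms(1,2), of False "\<lambda>j i. bernoulli_pmf (b j)"] by simp
  have pair: "pair_pmf (Pi_pmf I False (\<lambda>_. bernoulli_pmf a)) (Pi_pmf I (\<lambda>_. False) (\<lambda>_. ?relays))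
      = map_pmf (\<lambda>H. (fst \<circ> H, snd \<circ> H)) ?P"
    using assms(1) by (rule Pi_pmf_pair_pmf[symmetric])
  have "map_pmf (\<lambda>(r, R) i. r i \<or> (\<exists>j\<in>J. R (j, i)))
          (pair_pmf (Pi_pmf I False (\<lambda>_. bernoulli_pmf a))
                    (Pi_pmf (J \<times> I) False (\<lambda>(j, i). bernoulli_pmf (b j))))
      = map_pmf (\<lambda>H. ?g \<circ> H) ?P"
    unfolding Times pair_map_pmf2 pair map_pmf_comp
    by (intro map_pmf_cong refl) (auto simp: fun_eq_iff)
  also have "\<dots> = Pi_pmf I False (\<lambda>_. map_pmf ?g (pair_pmf (bernoulli_pmf a) ?relays))"
    using assms(1) by (rule Pi_pmf_map[symmetric]) auto
  also have "map_pmf ?g (pair_pmf (bernoulli_pmf a) ?relays)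
      = map_pmf (\<lambda>(x, z). x \<or> z) (pair_pmf (bernoulli_pmf a) (map_pmf (\<lambda>y. \<exists>j\<in>J. y j) ?relays))"
    unfolding pair_map_pmf2 map_pmf_comp by (intro map_pmf_cong refl) auto
  also have "\<dots> = bernoulli_pmf (1 - (1 - a) * (\<Prod>j\<in>J. 1 - b j))"
    using assms by (simp add: map_pmf_Bex_Pi_bernoulli map_pmf_disj_bernoulli prod_nonneg prod_le_1)
  finally show ?thesis .
qed

lemma bind_received_somewhere:
  fixes L NS :: nat and eSD :: real and eSR :: "nat \<Rightarrow> real"
  assumes "0 \<le> eSD" "eSD \<le> 1" "\<And>j. j < L \<Longrightarrow> 0 \<le> eSR j \<and> eSR j \<le> 1"
  shows "bind_pmf (Pi_pmf {..<NS} False (\<lambda>_. bernoulli_pmf (1 - eSD))) (\<lambda>rSD.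
           bind_pmf (Pi_pmf ({..<L} \<times> {..<NS}) False (\<lambda>(j, i). bernoulli_pmf (1 - eSR j))) (\<lambda>rSR.
             return_pmf (f (\<lambda>i. rSD i \<or> (\<exists>j<L. rSR (j, i))))))
         = map_pmf f (Pi_pmf {..<NS} False (\<lambda>_. bernoulli_pmf (1 - eSD * (\<Prod>j<L. eSR j))))"
proof -
  have "map_pmf (\<lambda>(rSD, rSR) i. rSD i \<or> (\<exists>j<L. rSR (j, i)))
          (pair_pmf (Pi_pmf {..<NS} False (\<lambda>_. bernoulli_pmf (1 - eSD)))
                    (Pi_pmf ({..<L} \<times> {..<NS}) False (\<lambda>(j, i). bernoulli_pmf (1 - eSR j))))
      = Pi_pmf {..<NS} False (\<lambda>_. bernoulli_pmf (1 - eSD * (\<Prod>j<L. eSR j)))"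
    using map_pmf_received_Pi_bernoulli[of "{..<NS}" "{..<L}" "1 - eSD" "\<lambda>j. 1 - eSR j"] assms
    by (simp add: Bex_def)
  from arg_cong[where f = "map_pmf f", OF this] show ?thesis
    by (simp add: map_pmf_comp pair_pmf_def map_bind_pmf)
qed

lemma P_decode_eq_expectation_binomial:
  assumes "0 \<le> e" "e \<le> 1"
  shows "measure_pmf.expectation (binomial_pmf N (1 - e)) (\<lambda>k. \<Prod>t<K. 1 - real q powi (int t - int k))
         = P_decode q K N e"
proof -
  let ?B = "\<lambda>k. \<Prod>t<K. 1 - real q powi (int t - int k)"
  have "measure_pmf.expectation (binomial_pmf N (1 - e)) ?B
      = (\<Sum>k\<le>N. real (N choose k) * (1 - e) ^ k * e ^ (N - k) * ?B k)"
    using assms by (subst expectation_binomial_pmf') auto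
  also have "\<dots> = (\<Sum>k=K..N. real (N choose k) * (1 - e) ^ k * e ^ (N - k) * ?B k)"
  proof (rule sum.mono_neutral_right)
    show "\<forall>k\<in>{..N} - {K..N}. real (N choose k) * (1 - e) ^ k * e ^ (N - k) * ?B k = 0"
    proof
      fix k assume "k \<in> {..N} - {K..N}"
      then have "?B k = 0" by (intro prod_zero bexI[of _ k]) auto
      then show "real (N choose k) * (1 - e) ^ k * e ^ (N - k) * ?B k = 0" by simp
    qed
  qed auto
  finally show ?thesis by (simp add: P_decode_def)
qed

theorem pmf_spanning_after_erasures:
  assumes "0 \<le> e" "e \<le> 1"
  shows "pmf (bind_pmf (Pi_pmf {..<N} (0\<^sub>v K) (\<lambda>_. pmf_of_set (carrier_vec K :: 'a::{field,finite} vec set)))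
           (\<lambda>C. map_pmf (\<lambda>s. spanning_family K {i. i < N \<and> s i} C)
                   (Pi_pmf {..<N} False (\<lambda>_. bernoulli_pmf (1 - e))))) True
         = P_decode CARD('a) K N e"
proof -
  let ?coeffs = "Pi_pmf {..<N} (0\<^sub>v K) (\<lambda>_. pmf_of_set (carrier_vec K :: 'a vec set))"
  let ?received = "Pi_pmf {..<N} False (\<lambda>_. bernoulli_pmf (1 - e))"
  let ?B = "\<lambda>k. \<Prod>t<K. 1 - real CARD('a) powi (int t - int k)"
  have prob: "pmf (map_pmf (\<lambda>C. spanning_family K {i. i < N \<and> s i} C) ?coeffs) True
      = ?B (card {i. i < N \<and> s i})" for s
    unfolding pmf_map vimage_def by (simp add: prob_spanning_family subset_eq)
  have "pmf (bind_pmf ?coeffs (\<lambda>C. map_pmf (\<lambda>s. spanning_family K {i. i < N \<and> s i} C) ?received)) True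
      = pmf (bind_pmf ?received (\<lambda>s. map_pmf (\<lambda>C. spanning_family K {i. i < N \<and> s i} C) ?coeffs)) True"
    unfolding map_pmf_def by (subst bind_commute_pmf) (rule refl)
  also have "\<dots> = measure_pmf.expectation ?received (\<lambda>s. ?B (card {i. i < N \<and> s i}))"
    by (simp add: pmf_bind prob)
  also have "\<dots> = measure_pmf.expectation (binomial_pmf N (1 - e)) ?B"
    using binomial_pmf_altdef'[of "{..<N}" N "1 - e" False] assms by simp
  also have "\<dots> = P_decode CARD('a) K N e"
    using assms by (rule P_decode_eq_expectation_binomial)
  finally show ?thesis .
qed

section \<open>Decoding at the destination through relays\<close>

lemma (in vec_space) non_distinct_cols_rank_less:
  assumes "A \<in> carrier_mat n nc" and "\<not> distinct (cols A)"
  shows "rank A < nc"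
proof -
  obtain S where S: "maximal S (\<lambda>T. T \<subseteq> set (cols A) \<and> lin_indpt T)"
    using maximal_exists[of "\<lambda>T. T \<subseteq> set (cols A) \<and> lin_indpt T" "card (set (cols A))" "{}"]
    by (meson List.finite_set card_mono empty_iff empty_subsetI finite_lin_indpt2 rev_finite_subset)
  then have "card S \<le> card (set (cols A))" by (simp add: card_mono maximal_def)
  also have "\<dots> < nc"
    using assms by (metis card_length cols_length carrier_matD(2) card_distinct nat_less_le)
  finally show ?thesis
    using rank_card_indpt[OF assms(1) S] by simp
qed

lemma full_column_rank_kernel_trivial:
  fixes A :: "'a::field mat"
  assumes A: "A \<in> carrier_mat n nc" and rank: "mat_rank A = nc"
    and v: "v \<in> carrier_vec nc" and Av: "A *\<^sub>v v = 0\<^sub>v n"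
  shows "v = 0\<^sub>v nc"
proof (rule ccontr)
  assume "v \<noteq> 0\<^sub>v nc"
  have rank': "vec_space.rank n A = nc" using A rank by (simp add: mat_rank_def)
  then have "distinct (cols A)" using vec_space.non_distinct_cols_rank_less[OF A] by force
  with A rank' v Av \<open>v \<noteq> 0\<^sub>v nc\<close> show False
    using vec_space.full_rank_lin_indpt vec_space.lin_depI by blast
qed

lemma mat_of_rows_mult_vec_eq_0:
  assumes "\<And>r. r \<in> set rs \<Longrightarrow> r \<in> carrier_vec n \<and> r \<bullet> x = 0"
  shows "mat_of_rows n rs *\<^sub>v x = 0\<^sub>v (length rs)"
  using assms by (intro eq_vecI) auto

lemma relay_decoding_imp_spanning:
  fixes C :: "nat \<Rightarrow> 'a::field vec" and K NS :: nat and rSR :: "nat \<times> nat \<Rightarrow> bool"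
  defines "CR \<equiv> \<lambda>j. mat_of_rows K (map C (filter (\<lambda>i. rSR (j, i)) [0..<NS]))"
  assumes C: "\<And>i. i < NS \<Longrightarrow> C i \<in> carrier_vec K"
    and G: "\<And>j. j < L \<Longrightarrow> G j \<in> carrier_mat NR (dim_row (CR j))"
    and decoded: "mat_rank (mat_of_rows K (map C (filter rSD [0..<NS]) @
          concat (map (\<lambda>j. map (\<lambda>r. row (G j * CR j) r) (filter (\<lambda>r. rRD (j, r)) [0..<NR])) [0..<L]))) = K"
  shows "spanning_family K {i. i < NS \<and> (rSD i \<or> (\<exists>j<L. rSR (j, i)))} C"
  unfolding spanning_family_def
proof (intro ballI impI)
  fix x :: "'a vec"
  assume x: "x \<in> carrier_vec K" and orth: "\<forall>i\<in>{i. i < NS \<and> (rSD i \<or> (\<exists>j<L. rSR (j, i)))}. C i \<bullet> x = 0"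
  have CR: "CR j \<in> carrier_mat (dim_row (CR j)) K" for j
    by (rule carrier_matI) (simp_all add: CR_def)
  have relay_kernel: "CR j *\<^sub>v x = 0\<^sub>v (dim_row (CR j))" if "j < L" for j
    unfolding CR_def mat_of_rows_carrier(2) using orth C that by (intro mat_of_rows_mult_vec_eq_0) auto
  have relay_rows: "row (G j * CR j) r \<in> carrier_vec K \<and> row (G j * CR j) r \<bullet> x = 0"
    if "j < L" "r < NR" for j r
  proof -
    have "row (G j * CR j) r \<bullet> x = ((G j * CR j) *\<^sub>v x) $ r"
      using G[OF that(1)] CR that(2) by simp
    also have "\<dots> = (G j *\<^sub>v (CR j *\<^sub>v x)) $ r"
      using assoc_mult_mat_vec[OF G[OF that(1)] CR x] by simp
    also have "\<dots> = 0"
      using relay_kernel[OF that(1)] G[OF that(1)] that(2) by simp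
    moreover have "dim_col (G j * CR j) = K" using CR[of j] by simp
    ultimately show ?thesis using row_carrier[of "G j * CR j" r] by simp
  qed
  let ?rows = "map C (filter rSD [0..<NS]) @
    concat (map (\<lambda>j. map (\<lambda>r. row (G j * CR j) r) (filter (\<lambda>r. rRD (j, r)) [0..<NR])) [0..<L])"
  have "r \<in> carrier_vec K \<and> r \<bullet> x = 0" if "r \<in> set ?rows" for r
  proof -
    from that consider (direct) "r \<in> set (map C (filter rSD [0..<NS]))"
      | (relayed) j k where "j < L" "k < NR" "r = row (G j * CR j) k"
      by auto
    then show ?thesis
    proof cases
      case direct
      then show ?thesis using C orth by auto
    next
      case relayed
      then show ?thesis using relay_rows by simp
    qed
  qed
  then have "mat_of_rows K ?rows *\<^sub>v x = 0\<^sub>v (length ?rows)"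
    by (rule mat_of_rows_mult_vec_eq_0)
  then show "x = 0\<^sub>v K"
    by (rule full_column_rank_kernel_trivial[OF mat_of_rows_carrier(1) decoded x])
qed

lemma pmf_bind_mono:
  assumes "\<And>x. x \<in> set_pmf p \<Longrightarrow> pmf (f x) b \<le> pmf (g x) b"
  shows "pmf (bind_pmf p f) b \<le> pmf (bind_pmf p g) b"
  unfolding pmf_bind
  by (rule integral_mono_AE)
     (auto intro!: measure_pmf.integrable_const_bound[where B = 1] AE_pmfI assms simp: pmf_le_1)

lemma pmf_True_le_return_pmf:
  assumes "\<And>b. b \<in> set_pmf p \<Longrightarrow> b \<Longrightarrow> P"
  shows "pmf p True \<le> pmf (return_pmf P) True"
proof (cases P)
  case True
  then show ?thesis by (simp add: pmf_le_1)
next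
  case False
  with assms have "True \<notin> set_pmf p" by blast
  then show ?thesis by (simp add: set_pmf_iff)
qed

lemma Pi_pmf_of_set_memberD:
  assumes "f \<in> set_pmf (Pi_pmf A d (\<lambda>x. pmf_of_set (B x)))"
    and "finite A" "x \<in> A" "finite (B x)" "B x \<noteq> {}"
  shows "f x \<in> B x"
proof -
  have "f x \<in> set_pmf (pmf_of_set (B x))"
    using assms(1-3) by (auto simp: set_Pi_pmf PiE_dflt_def)
  with assms(4,5) show ?thesis by simp
qed

lemma pmf_relay_success_le:
  "pmf (relay_success_pmf TYPE('a::{field,finite}) K L NS NR eSD eSR eRD) True \<le>
   pmf (bind_pmf (Pi_pmf {..<NS} (0\<^sub>v K) (\<lambda>_. pmf_of_set (carrier_vec K :: 'a vec set))) (\<lambda>C.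
        bind_pmf (Pi_pmf {..<NS} False (\<lambda>_. bernoulli_pmf (1 - eSD))) (\<lambda>rSD.
        bind_pmf (Pi_pmf ({..<L} \<times> {..<NS}) False (\<lambda>(j, i). bernoulli_pmf (1 - eSR j))) (\<lambda>rSR.
        return_pmf (spanning_family K {i. i < NS \<and> (rSD i \<or> (\<exists>j<L. rSR (j, i)))} C))))) True"
  unfolding relay_success_pmf_def Let_def
proof (intro pmf_bind_mono pmf_True_le_return_pmf, goal_cases)
  case (1 C rSD rSR b)
  have C: "C i \<in> carrier_vec K" if "i < NS" for i
    by (rule Pi_pmf_of_set_memberD[OF 1(1)]) (use that carrier_vec_nonempty in auto)
  from 1(4,5) obtain G rRD where
    G: "G \<in> set_pmf (Pi_pmf {..<L} (0\<^sub>m 0 0) (\<lambda>j. pmf_of_set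
          (carrier_mat NR (dim_row (mat_of_rows K (map C (filter (\<lambda>i. rSR (j, i)) [0..<NS])))))))"
    and decoded: "mat_rank (mat_of_rows K (map C (filter rSD [0..<NS]) @
          concat (map (\<lambda>j. map (\<lambda>r. row (G j * mat_of_rows K (map C (filter (\<lambda>i. rSR (j, i)) [0..<NS]))) r)
            (filter (\<lambda>r. rRD (j, r)) [0..<NR])) [0..<L]))) = K"
    unfolding set_bind_pmf set_return_pmf by blast
  have "G j \<in> carrier_mat NR (dim_row (mat_of_rows K (map C (filter (\<lambda>i. rSR (j, i)) [0..<NS]))))"
    if "j < L" for j
    by (rule Pi_pmf_of_set_memberD[OF G]) (use that carrier_mat_nonempty in auto)
  from C this decoded show ?case
    by (rule relay_decoding_imp_spanning)
qed

theorem proposition2: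
  fixes K L NS NR :: nat and eSD :: real and eSR eRD :: "nat \<Rightarrow> real"
  assumes "K \<ge> 1" and "L \<ge> 1" and "NS \<ge> K" and "NR \<ge> 1"
    and "0 \<le> eSD" and "eSD \<le> 1"
    and "\<And>j. j < L \<Longrightarrow> 0 \<le> eSR j \<and> eSR j \<le> 1"
    and "\<And>j. j < L \<Longrightarrow> 0 \<le> eRD j \<and> eRD j \<le> 1"
  shows "pmf (relay_success_pmf TYPE('a::{field,finite}) K L NS NR eSD eSR eRD) True
           \<le> P_decode CARD('a) K NS (eSD * (\<Prod>j<L. eSR j))"
proof -
  let ?e = "eSD * (\<Prod>j<L. eSR j)"
  let ?coeffs = "Pi_pmf {..<NS} (0\<^sub>v K) (\<lambda>_. pmf_of_set (carrier_vec K :: 'a vec set))"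
  let ?direct = "Pi_pmf {..<NS} False (\<lambda>_. bernoulli_pmf (1 - eSD))"
  let ?relayed = "Pi_pmf ({..<L} \<times> {..<NS}) False (\<lambda>(j, i). bernoulli_pmf (1 - eSR j))"
  have "0 \<le> (\<Prod>j<L. eSR j)" "(\<Prod>j<L. eSR j) \<le> 1"
    using assms(7) by (auto intro: prod_nonneg prod_le_1)
  with assms(5,6) have e: "0 \<le> ?e" "?e \<le> 1"
    by (auto intro: mult_le_one)
  have received: "bind_pmf ?direct (\<lambda>rSD. bind_pmf ?relayed (\<lambda>rSR.
        return_pmf (spanning_family K {i. i < NS \<and> (rSD i \<or> (\<exists>j<L. rSR (j, i)))} C)))
      = map_pmf (\<lambda>s. spanning_family K {i. i < NS \<and> s i} C) (Pi_pmf {..<NS} False (\<lambda>_. bernoulli_pmf (1 - ?e)))"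
    for C :: "nat \<Rightarrow> 'a vec"
    using bind_received_somewhere[OF assms(5-7), where f = "\<lambda>s. spanning_family K {i. i < NS \<and> s i} C"]
    by simp
  have "pmf (relay_success_pmf TYPE('a) K L NS NR eSD eSR eRD) True \<le>
      pmf (bind_pmf ?coeffs (\<lambda>C. map_pmf (\<lambda>s. spanning_family K {i. i < NS \<and> s i} C)
        (Pi_pmf {..<NS} False (\<lambda>_. bernoulli_pmf (1 - ?e))))) True"
    using pmf_relay_success_le[where 'a = 'a, of K L NS NR eSD eSR eRD] by (simp only: received)
  also have "\<dots> = P_decode CARD('a) K NS ?e"
    using e by (rule pmf_spanning_after_erasures)
  finally show ?thesis .
qed

end
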